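(* Let $T_1\cup\dots\cup T_L=[n]$ be a partition, $p_\ell$ integers and $\Gamma$ an integer. The coefficient matrix (in the variables $(\pmb y,\pmb\delta)\in\mathbb R^n\times\mathbb R^n$) of the constraint system \[y_i+\delta_i\le1\ \ \forall i\in[n],\qquad \sum_{i\in[n]}\delta_i\le\Gamma,\qquad \sum_{i\in T_\ell}y_i=p_\ell\ \ \forall\ell\in[L]\] is totally unimodular.
   Context: $[n]=\{1,\dots,n\}$. This is the constraint system of the adversarial problem of balanced regret multi-representative selection for a fixed value of the auxiliary variable $s$, namely $\max\ \sum_i(\hat c_i+d_i\delta_i)x_i-\sum_i\hat c_iy_i-\Gamma's-\sum_i[d_i-d_ix_i-s]_+y_i$ subject to these constraints and $\pmb y,\pmb\delta$ binary. *)

theory Defs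
  imports "Jordan_Normal_Form.Determinant" "Jordan_Normal_Form.DL_Submatrix"
begin

definition totally_unimodular :: "int mat \<Rightarrow> bool" where
  "totally_unimodular A \<longleftrightarrow>
     (\<forall>I J. I \<subseteq> {..<dim_row A} \<longrightarrow> J \<subseteq> {..<dim_col A} \<longrightarrow> card I = card J \<longrightarrow>
        det (submatrix A I J) \<in> {-1, 0, 1})"

text \<open>Coefficient matrix of the system (0-based indices).
  Columns: 0..n-1 are y_0..y_{n-1}; n..2n-1 are delta_0..delta_{n-1}.
  Rows: i < n is  y_i + delta_i <= 1;  row n is  sum_i delta_i <= Gamma;
  row n+1+l (l < L) is  sum_{i in T l} y_i = p_l.\<close>
definition brmrs_matrix :: "nat \<Rightarrow> nat \<Rightarrow> (nat \<Rightarrow> nat set) \<Rightarrow> int mat" where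
  "brmrs_matrix n L T = mat (n + 1 + L) (2 * n) (\<lambda>(r, c).
     if r < n then (if c = r \<or> c = n + r then 1 else 0)
     else if r = n then (if n \<le> c then 1 else 0)
     else (if c < n \<and> c \<in> T (r - n - 1) then 1 else 0))"

end

theory Submission
  imports Defs
begin

text \<open>
  Put the rows \<open>y\<^sub>i + \<delta>\<^sub>i \<le> 1\<close> on one side and the budget row and the partition rows on
  the other. Since the parts \<open>T\<^sub>l\<close> are disjoint, every column is a 0/1 vector with at most one
  1 on each side: the matrix is the incidence matrix of a bipartite graph. Square submatrices
  of such matrices are again of this form; expanding along a column with a single 1 reduces
  the size, and if there is no such column, then the rows of one side minus the rows of the
  other sum to zero, so the determinant vanishes.
\<close>

text \<open>Rows are the vertices of a bipartite graph with sides \<open>side\<close>, columns are edges, which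
  may have lost one or both endpoints.\<close>
definition bipartite_incidence_mat :: "(nat \<Rightarrow> bool) \<Rightarrow> 'a :: {zero, one} mat \<Rightarrow> bool" where
  "bipartite_incidence_mat side M \<longleftrightarrow>
     (\<forall>i<dim_row M. \<forall>j<dim_col M. M $$ (i, j) \<in> {0, 1}) \<and>
     (\<forall>i<dim_row M. \<forall>i'<dim_row M. \<forall>j<dim_col M.
        i \<noteq> i' \<longrightarrow> M $$ (i, j) = 1 \<longrightarrow> M $$ (i', j) = 1 \<longrightarrow> side i \<noteq> side i')"

lemma bipartite_incidence_mat_entry:
  "bipartite_incidence_mat side M \<Longrightarrow> i < dim_row M \<Longrightarrow> j < dim_col M \<Longrightarrow>
    M $$ (i, j) = 0 \<or> M $$ (i, j) = 1"
  unfolding bipartite_incidence_mat_def by blast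

lemma bipartite_incidence_mat_side:
  "bipartite_incidence_mat side M \<Longrightarrow> i < dim_row M \<Longrightarrow> i' < dim_row M \<Longrightarrow> j < dim_col M \<Longrightarrow>
    i \<noteq> i' \<Longrightarrow> M $$ (i, j) = 1 \<Longrightarrow> M $$ (i', j) = 1 \<Longrightarrow> side i \<noteq> side i'"
  unfolding bipartite_incidence_mat_def by blast

lemma bipartite_incidence_mat_column_other_entry:
  assumes M: "bipartite_incidence_mat side M"
    and rows: "i < dim_row M" "i\<^sub>1 < dim_row M" "i\<^sub>2 < dim_row M" "i \<notin> {i\<^sub>1, i\<^sub>2}" "i\<^sub>1 \<noteq> i\<^sub>2"
    and j: "j < dim_col M"
    and ones: "M $$ (i\<^sub>1, j) = 1" "M $$ (i\<^sub>2, j) = 1"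
  shows "M $$ (i, j) = 0"
proof (rule ccontr)
  assume "M $$ (i, j) \<noteq> 0"
  then have one: "M $$ (i, j) = 1" using bipartite_incidence_mat_entry[OF M rows(1) j] by simp
  have "side i \<noteq> side i\<^sub>1"
    by (rule bipartite_incidence_mat_side[OF M rows(1,2) j _ one ones(1)]) (use rows(4) in simp)
  moreover have "side i \<noteq> side i\<^sub>2"
    by (rule bipartite_incidence_mat_side[OF M rows(1,3) j _ one ones(2)]) (use rows(4) in simp)
  moreover have "side i\<^sub>1 \<noteq> side i\<^sub>2"
    by (rule bipartite_incidence_mat_side[OF M rows(2,3) j rows(5) ones])
  ultimately show False by blast
qed

lemma bipartite_incidence_mat_reindex:
  assumes M: "bipartite_incidence_mat side M"
    and N_index: "\<And>a b. a < dim_row N \<Longrightarrow> b < dim_col N \<Longrightarrow> N $$ (a, b) = M $$ (r a, c b)"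
    and r: "\<And>a. a < dim_row N \<Longrightarrow> r a < dim_row M" "inj_on r {..<dim_row N}"
    and c: "\<And>b. b < dim_col N \<Longrightarrow> c b < dim_col M"
  shows "bipartite_incidence_mat (side \<circ> r) N"
  unfolding bipartite_incidence_mat_def
proof (intro conjI allI impI)
  fix a b assume ab: "a < dim_row N" "b < dim_col N"
  show "N $$ (a, b) \<in> {0, 1}"
    using bipartite_incidence_mat_entry[OF M r(1)[OF ab(1)] c[OF ab(2)]] N_index[OF ab] by simp
next
  fix a a' b assume ab: "a < dim_row N" "a' < dim_row N" "b < dim_col N" "a \<noteq> a'"
    and ones: "N $$ (a, b) = 1" "N $$ (a', b) = 1"
  have "r a \<noteq> r a'" using inj_on_contraD[OF r(2)] ab by simp
  then show "(side \<circ> r) a \<noteq> (side \<circ> r) a'"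
    unfolding comp_def
    by (rule bipartite_incidence_mat_side[OF M r(1)[OF ab(1)] r(1)[OF ab(2)] c[OF ab(3)]])
      (use ones N_index ab in simp_all)
qed

lemma bipartite_incidence_mat_delete:
  assumes "bipartite_incidence_mat side M"
  shows "bipartite_incidence_mat (side \<circ> insert_index i) (mat_delete M i j)"
proof (rule bipartite_incidence_mat_reindex[OF assms])
  show "inj_on (insert_index i) {..<dim_row (mat_delete M i j)}"
    by (rule insert_index_inj_on)
qed (auto simp: mat_delete_def insert_index_def)

lemma bipartite_incidence_mat_submatrix:
  assumes "bipartite_incidence_mat side A"
  shows "bipartite_incidence_mat (side \<circ> pick I) (submatrix A I J)"
proof (rule bipartite_incidence_mat_reindex[OF assms])
  let ?S = "{i. i < dim_row A \<and> i \<in> I}"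
  have "pick I a < pick I a'" if "a < a'" "a' < card ?S" for a a'
    using pick_mono[of a' ?S a] pick_reduce_set[of a "dim_row A" I] pick_reduce_set[of a' "dim_row A" I]
      that by simp
  then show "inj_on (pick I) {..<dim_row (submatrix A I J)}"
    unfolding dim_submatrix inj_on_def by (metis lessThan_iff linorder_neqE_nat order.strict_trans less_irrefl)
qed (auto simp: dim_submatrix submatrix_index pick_le)

lemma det_eq_cofactor_if_column_single_nonzero:
  fixes A :: "'a :: comm_ring_1 mat"
  assumes A: "A \<in> carrier_mat n n" and ij: "i < n" "j < n"
    and zero: "\<And>i'. i' < n \<Longrightarrow> i' \<noteq> i \<Longrightarrow> A $$ (i', j) = 0"
  shows "det A = A $$ (i, j) * cofactor A i j"
proof -
  have "det A = (\<Sum>i'<n. A $$ (i', j) * cofactor A i' j)"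
    by (rule laplace_expansion_column[OF A ij(2)])
  also have "\<dots> = (\<Sum>i'<n. if i' = i then A $$ (i, j) * cofactor A i j else 0)"
    by (rule sum.cong) (simp_all add: zero)
  also have "\<dots> = A $$ (i, j) * cofactor A i j"
    using ij by simp
  finally show ?thesis .
qed

lemma det_bipartite_incidence_mat_eq_0:
  fixes M :: "'a :: idom mat"
  assumes M: "M \<in> carrier_mat n n" "bipartite_incidence_mat side M" and n: "0 < n"
    and paired: "\<And>i j. i < n \<Longrightarrow> j < n \<Longrightarrow> M $$ (i, j) = 1 \<Longrightarrow> \<exists>i'<n. i' \<noteq> i \<and> M $$ (i', j) = 1"
  shows "det M = 0"
proof -
  define v :: "'a vec" where "v = vec n (\<lambda>i. if side i then 1 else -1)"
  have v: "v \<in> carrier_vec n" "v \<noteq> 0\<^sub>v n"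
    using n by (auto simp: v_def vec_eq_iff)
  have column_sum: "(\<Sum>i<n. M $$ (i, j) * v $ i) = 0" if j: "j < n" for j
  proof (cases "\<exists>i<n. M $$ (i, j) = 1")
    case True
    then obtain i\<^sub>1 i\<^sub>2 where i: "i\<^sub>1 < n" "i\<^sub>2 < n" "i\<^sub>1 \<noteq> i\<^sub>2"
      and ones: "M $$ (i\<^sub>1, j) = 1" "M $$ (i\<^sub>2, j) = 1"
      using paired j by metis
    have "(\<Sum>i<n. M $$ (i, j) * v $ i) = (\<Sum>i\<in>{i\<^sub>1, i\<^sub>2}. M $$ (i, j) * v $ i)"
    proof (rule sum.mono_neutral_right)
      show "\<forall>i\<in>{..<n} - {i\<^sub>1, i\<^sub>2}. M $$ (i, j) * v $ i = 0"
        using bipartite_incidence_mat_column_other_entry[OF M(2) _ _ _ _ i(3) _ ones] M(1) i j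
        by simp
    qed (use i in auto)
    also have "\<dots> = v $ i\<^sub>1 + v $ i\<^sub>2"
      using i ones by simp
    also have "\<dots> = 0"
      using bipartite_incidence_mat_side[OF M(2) _ _ _ i(3) ones] M(1) i j
      by (cases "side i\<^sub>1") (simp_all add: v_def)
    finally show ?thesis .
  next
    case False
    then have "M $$ (i, j) = 0" if "i < n" for i
      using bipartite_incidence_mat_entry[OF M(2)] M(1) that j by blast
    then show ?thesis by simp
  qed
  have "transpose_mat M *\<^sub>v v = 0\<^sub>v n"
    using M(1) v(1) column_sum by (auto simp: scalar_prod_def lessThan_atLeast0 intro!: eq_vecI)
  then have "det (transpose_mat M) = 0"
    using det_0_iff_vec_prod_zero[of "transpose_mat M" n] M(1) v by auto
  then show ?thesis
    by (simp add: det_transpose[OF M(1)])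
qed

lemma det_bipartite_incidence_mat:
  fixes M :: "'a :: idom mat"
  assumes "M \<in> carrier_mat n n" "bipartite_incidence_mat side M"
  shows "det M \<in> {-1, 0, 1}"
  using assms
proof (induction n arbitrary: M side)
  case 0
  then show ?case by simp
next
  case (Suc n)
  note M = Suc.prems
  have entry: "M $$ (i, j) = 0 \<or> M $$ (i, j) = 1" if "i < Suc n" "j < Suc n" for i j
    using bipartite_incidence_mat_entry[OF M(2)] M(1) that by simp
  show ?case
  proof (cases "\<exists>i<Suc n. \<exists>j<Suc n. M $$ (i, j) = 1 \<and> (\<forall>i'<Suc n. i' \<noteq> i \<longrightarrow> M $$ (i', j) = 0)")
    case True
    then obtain i j where ij: "i < Suc n" "j < Suc n" and one: "M $$ (i, j) = 1"
      and zero: "\<And>i'. i' < Suc n \<Longrightarrow> i' \<noteq> i \<Longrightarrow> M $$ (i', j) = 0"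
      by blast
    have "det M = (-1) ^ (i + j) * det (mat_delete M i j)"
      using det_eq_cofactor_if_column_single_nonzero[OF M(1) ij zero] one
      by (simp add: cofactor_def)
    moreover have "det (mat_delete M i j) \<in> {-1, 0, 1}"
      using mat_delete_carrier[OF M(1)] bipartite_incidence_mat_delete[OF M(2)]
      by (intro Suc.IH) simp_all
    ultimately show ?thesis
      by (cases "even (i + j)") auto
  next
    case False
    then have paired: "\<exists>i'<Suc n. i' \<noteq> i \<and> M $$ (i', j) = 1"
      if "i < Suc n" "j < Suc n" "M $$ (i, j) = 1" for i j
      using entry that by blast
    have "det M = 0"
      by (rule det_bipartite_incidence_mat_eq_0[OF M _ paired]) simp_all
    then show ?thesis by simp
  qed
qed

lemma bipartite_incidence_mat_totally_unimodular:
  assumes "bipartite_incidence_mat side A"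
  shows "totally_unimodular A"
  unfolding totally_unimodular_def
proof (intro allI impI)
  fix I J assume I: "I \<subseteq> {..<dim_row A}" and J: "J \<subseteq> {..<dim_col A}" and card: "card I = card J"
  have rows: "{i. i < dim_row A \<and> i \<in> I} = I" and cols: "{j. j < dim_col A \<and> j \<in> J} = J"
    using I J by blast+
  have "submatrix A I J \<in> carrier_mat (card I) (card I)"
  proof (rule carrier_matI)
    show "dim_row (submatrix A I J) = card I" unfolding dim_submatrix rows ..
    show "dim_col (submatrix A I J) = card I" unfolding dim_submatrix cols card ..
  qed
  then show "det (submatrix A I J) \<in> {-1, 0, 1}"
    using bipartite_incidence_mat_submatrix[OF assms] by (rule det_bipartite_incidence_mat)
qed

lemma bipartite_incidence_brmrs_matrix:
  assumes disjoint: "\<forall>l<L. \<forall>l'<L. l \<noteq> l' \<longrightarrow> T l \<inter> T l' = {}"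
  shows "bipartite_incidence_mat (\<lambda>r. r < n) (brmrs_matrix n L T)"
  unfolding bipartite_incidence_mat_def
proof (intro conjI allI impI)
  fix r c assume "r < dim_row (brmrs_matrix n L T)" "c < dim_col (brmrs_matrix n L T)"
  then show "brmrs_matrix n L T $$ (r, c) \<in> {0, 1}"
    by (simp add: brmrs_matrix_def)
next
  fix r r' c assume "r < dim_row (brmrs_matrix n L T)" "r' < dim_row (brmrs_matrix n L T)"
    "c < dim_col (brmrs_matrix n L T)" "r \<noteq> r'"
    and "brmrs_matrix n L T $$ (r, c) = 1" "brmrs_matrix n L T $$ (r', c) = 1"
  then have r: "r < n + 1 + L" "r' < n + 1 + L" "r \<noteq> r'"
    and one: "r < n \<and> (c = r \<or> c = n + r) \<or> r = n \<and> n \<le> c \<or> n < r \<and> c < n \<and> c \<in> T (r - n - 1)"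
    and one': "r' < n \<and> (c = r' \<or> c = n + r') \<or> r' = n \<and> n \<le> c \<or> n < r' \<and> c < n \<and> c \<in> T (r' - n - 1)"
    by (simp_all add: brmrs_matrix_def split: if_splits)
  show "(r < n) \<noteq> (r' < n)"
  proof
    assume same_side: "(r < n) = (r' < n)"
    show False
    proof (cases "n < r \<and> n < r'")
      case True
      then have "r - n - 1 < L" "r' - n - 1 < L" "r - n - 1 \<noteq> r' - n - 1"
        using r by linarith+
      moreover have "c \<in> T (r - n - 1)" "c \<in> T (r' - n - 1)"
        using one one' True by simp_all
      ultimately show False
        using disjoint by blast
    next
      case False
      then show False
        using one one' same_side r(3) by linarith
    qed
  qed
qed

theorem lemma6:
  fixes n L :: nat and T :: "nat \<Rightarrow> nat set" and p :: "nat \<Rightarrow> int" and \<Gamma> :: int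
  assumes parts_nonempty: "\<forall>l<L. T l \<noteq> {}"
    and parts_disjoint: "\<forall>l<L. \<forall>l'<L. l \<noteq> l' \<longrightarrow> T l \<inter> T l' = {}"
    and parts_cover: "(\<Union>l<L. T l) = {..<n}"
  shows "totally_unimodular (brmrs_matrix n L T)"
  using bipartite_incidence_brmrs_matrix[OF parts_disjoint]
  by (rule bipartite_incidence_mat_totally_unimodular)

end
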